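(* For any fixed $t\in\mathbb N$, $$\|\pi_h-\pi_t\|_{\mathrm{TV}}=\mathbf E\big[\|\pi_h-\pi_t\|_{\mathrm{TV}}\big]+o_{\mathbf P}(1),$$ where $o_{\mathbf P}(1)$ denotes a term tending to $0$ in probability as $n\to\infty$ and the expectation is over the environment.
   Context: Configuration model: for each $n$, $(d_i^-)_{1\le i\le n}$, $(d_i^+)_{1\le i\le n}$ positive integers with $\sum_id_i^-=\sum_id_i^+=m$; each vertex $i\in V=\{1,\dots,n\}$ carries a set $E_i^+$ of $d_i^+$ tails and $E_i^-$ of $d_i^-$ heads; the environment $\omega$ is a uniformly random bijection from tails to heads, $\omega(e)=f$ an arc from the vertex of $e$ to that of $f$; $P(i,j)=\frac1{d_i^+}|\{e\in E_i^+:\omega(e)\in E_j^-\}|$. Standing assumption: $\min_i\min(d_i^+,d_i^-)\ge2$ and $\Delta:=\max_i\max(d_i^+,d_i^-)$ bounded uniformly in $n$. $h=\lfloor\frac{\ln n}{10\ln\Delta}\rfloor$, $\pi_0(i)=d_i^-/m$, $\pi_s=\pi_0P^s$. *)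

theory Defs
  imports "HOL-Probability.Probability"
begin

definition half_edges :: "(nat \<Rightarrow> nat) \<Rightarrow> nat \<Rightarrow> (nat \<times> nat) set" where
  "half_edges d n = {(i, k). i < n \<and> k < d i}"

text \<open>Environments: bijections from tails (out-half-edges) to heads (in-half-edges),
  made extensional so that the set is finite and the uniform law makes sense.\<close>
definition envs :: "(nat \<Rightarrow> nat) \<Rightarrow> (nat \<Rightarrow> nat) \<Rightarrow> nat \<Rightarrow> ((nat \<times> nat) \<Rightarrow> (nat \<times> nat)) set" where
  "envs dout din n = {\<omega>. bij_betw \<omega> (half_edges dout n) (half_edges din n)
                          \<and> \<omega> \<in> extensional (half_edges dout n)}"

definition num_arcs :: "(nat \<Rightarrow> nat) \<Rightarrow> nat \<Rightarrow> nat" where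
  "num_arcs d n = (\<Sum>i<n. d i)"

definition trans_P :: "(nat \<Rightarrow> nat) \<Rightarrow> (nat \<Rightarrow> nat) \<Rightarrow> nat \<Rightarrow> ((nat \<times> nat) \<Rightarrow> (nat \<times> nat))
    \<Rightarrow> nat \<Rightarrow> nat \<Rightarrow> real" where
  "trans_P dout din n \<omega> i j =
     real (card {e \<in> half_edges dout n. fst e = i \<and> \<omega> e \<in> half_edges din n \<and> fst (\<omega> e) = j})
     / real (dout i)"

fun pi_s :: "(nat \<Rightarrow> nat) \<Rightarrow> (nat \<Rightarrow> nat) \<Rightarrow> nat \<Rightarrow> ((nat \<times> nat) \<Rightarrow> (nat \<times> nat))
    \<Rightarrow> nat \<Rightarrow> nat \<Rightarrow> real" where
  "pi_s dout din n \<omega> 0 j = real (din j) / real (num_arcs din n)"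
| "pi_s dout din n \<omega> (Suc s) j = (\<Sum>i<n. pi_s dout din n \<omega> s i * trans_P dout din n \<omega> i j)"

definition tv_dist :: "nat \<Rightarrow> (nat \<Rightarrow> real) \<Rightarrow> (nat \<Rightarrow> real) \<Rightarrow> real" where
  "tv_dist n \<mu> \<nu> = (1/2) * (\<Sum>j<n. \<bar>\<mu> j - \<nu> j\<bar>)"

definition max_deg :: "(nat \<Rightarrow> nat) \<Rightarrow> (nat \<Rightarrow> nat) \<Rightarrow> nat \<Rightarrow> nat" where
  "max_deg dout din n = Max ((\<lambda>i. max (dout i) (din i)) ` {..<n})"

definition hor :: "(nat \<Rightarrow> nat) \<Rightarrow> (nat \<Rightarrow> nat) \<Rightarrow> nat \<Rightarrow> nat" where
  "hor dout din n = nat \<lfloor>ln (real n) / (10 * ln (real (max_deg dout din n)))\<rfloor>"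

definition tv_ht :: "(nat \<Rightarrow> nat) \<Rightarrow> (nat \<Rightarrow> nat) \<Rightarrow> nat \<Rightarrow> nat \<Rightarrow> ((nat \<times> nat) \<Rightarrow> (nat \<times> nat)) \<Rightarrow> real" where
  "tv_ht dout din n t \<omega> =
     tv_dist n (pi_s dout din n \<omega> (hor dout din n)) (pi_s dout din n \<omega> t)"

end

theory Submission
  imports Defs "HOL-Combinatorics.Transposition" "HOL-Real_Asymp.Real_Asymp"
begin

text \<open>An environment is a uniform bijection from tails to heads. Composing it with the
  transposition of two heads moves at most two arcs, which changes \<open>\<pi>\<^sub>s\<close> by
  \<open>O(s \<Delta>\<^sup>s / m)\<close> in \<open>\<ell>\<^sup>1\<close>; hence \<open>\<parallel>\<pi>\<^sub>h - \<pi>\<^sub>t\<parallel>\<^sub>T\<^sub>V\<close> has bounded differences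
  \<open>c = O((h \<Delta>\<^sup>h + t \<Delta>\<^sup>t) / m)\<close> under such swaps. For any function on uniform bijections with
  this property the variance is at most \<open>m c\<^sup>2\<close> (condition on the image of one tail: the
  fibres are carried onto one another by transpositions, so their means differ by at most
  \<open>c\<close>, and induct). Since \<open>\<Delta>\<^sup>h \<le> n\<^sup>1\<^sup>/\<^sup>1\<^sup>0\<close>, \<open>h \<le> ln n\<close> and \<open>m \<ge> 2n\<close>, the variance is
  \<open>O(n\<^sup>-\<^sup>4\<^sup>/\<^sup>5 ln\<^sup>2 n)\<close> and Chebyshev's inequality concludes.\<close>

section \<open>Bounded differences for uniformly random bijections\<close>

definition ext_bijections :: "'a set \<Rightarrow> 'b set \<Rightarrow> ('a \<Rightarrow> 'b) set" where
  "ext_bijections T H = {\<omega>. bij_betw \<omega> T H \<and> \<omega> \<in> extensional T}"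

definition swap_target :: "'a set \<Rightarrow> 'b \<Rightarrow> 'b \<Rightarrow> ('a \<Rightarrow> 'b) \<Rightarrow> 'a \<Rightarrow> 'b" where
  "swap_target T a b \<omega> = restrict (Transposition.transpose a b \<circ> \<omega>) T"

lemma finite_ext_bijections: "finite T \<Longrightarrow> finite H \<Longrightarrow> finite (ext_bijections T H)"
  by (rule finite_subset[of _ "PiE T (\<lambda>_. H)"])
     (auto simp: ext_bijections_def bij_betw_def PiE_iff extensional_def intro: finite_PiE)

lemma ext_bijections_nonempty:
  assumes "finite T" "finite H" "card T = card H"
  shows "ext_bijections T H \<noteq> {}"
proof -
  obtain g where "bij_betw g T H" using finite_same_card_bij[OF assms] by blast
  then have "restrict g T \<in> ext_bijections T H"
    by (simp add: ext_bijections_def bij_betw_cong[of T "restrict g T" g])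
  then show ?thesis by blast
qed

lemma swap_target_apply: "x \<in> T \<Longrightarrow> swap_target T a b \<omega> x = Transposition.transpose a b (\<omega> x)"
  by (simp add: swap_target_def)

lemma swap_target_in_ext_bijections:
  assumes "\<omega> \<in> ext_bijections T H" "a \<in> H" "b \<in> H"
  shows "swap_target T a b \<omega> \<in> ext_bijections T H"
proof -
  have "bij_betw (Transposition.transpose a b \<circ> \<omega>) T H"
    using assms by (intro bij_betw_trans) (auto simp: ext_bijections_def)
  then show ?thesis
    by (simp add: ext_bijections_def swap_target_def
        bij_betw_cong[of T "restrict (Transposition.transpose a b \<circ> \<omega>) T"])
qed

lemma swap_target_swap_target:
  "\<omega> \<in> ext_bijections T H \<Longrightarrow> swap_target T a b (swap_target T a b \<omega>) = \<omega>"
  by (auto simp: ext_bijections_def swap_target_def extensional_def fun_eq_iff)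

lemma fun_upd_swap_target:
  "x \<notin> T \<Longrightarrow> a \<noteq> c \<Longrightarrow> b \<noteq> c \<Longrightarrow>
    (swap_target T a b \<psi>)(x := c) = swap_target (insert x T) a b (\<psi>(x := c))"
  by (auto simp: swap_target_def fun_eq_iff)

lemma fun_upd_in_ext_bijections:
  assumes "x \<notin> T" "c \<in> H" "\<psi> \<in> ext_bijections T (H - {c})"
  shows "\<psi>(x := c) \<in> ext_bijections (insert x T) H"
proof -
  have bij: "bij_betw \<psi> T (H - {c})" and ext: "\<psi> \<in> extensional T"
    using assms(3) by (auto simp: ext_bijections_def)
  have "bij_betw (\<psi>(x := c)) T (H - {c})"
    by (rule bij_betw_cong[THEN iffD1, OF _ bij]) (use assms(1) in auto)
  then have "bij_betw (\<psi>(x := c)) (T \<union> {x}) ((H - {c}) \<union> {c})"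
    using notIn_Un_bij_betw3[of x T "\<psi>(x := c)" "H - {c}"] assms(1) by simp
  moreover have "(H - {c}) \<union> {c} = H" using assms(2) by auto
  ultimately show ?thesis using ext by (auto simp: ext_bijections_def extensional_def)
qed

lemma ext_bijections_fiber_eq:
  assumes "x \<notin> T" "c \<in> H"
  shows "{\<omega> \<in> ext_bijections (insert x T) H. \<omega> x = c} = (\<lambda>\<psi>. \<psi>(x := c)) ` ext_bijections T (H - {c})"
proof (intro equalityI subsetI)
  fix \<omega> assume "\<omega> \<in> {\<omega> \<in> ext_bijections (insert x T) H. \<omega> x = c}"
  then have bij: "bij_betw \<omega> (insert x T) H" and ext: "\<omega> \<in> extensional (insert x T)"
    and c: "\<omega> x = c"
    by (auto simp: ext_bijections_def)
  define \<psi> where "\<psi> = fun_upd \<omega> x undefined"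
  have "bij_betw \<omega> T (H - {c})"
    using bij_betw_DiffI[OF bij, of "{x}" "{c}"] assms(1) c bij by (auto simp: bij_betw_def)
  then have "bij_betw \<psi> T (H - {c})"
    by (rule bij_betw_cong[THEN iffD1, rotated]) (use assms(1) in \<open>auto simp: \<psi>_def\<close>)
  moreover have "\<psi> \<in> extensional T" using ext by (auto simp: extensional_def \<psi>_def)
  moreover have "\<omega> = \<psi>(x := c)" using c by (auto simp: \<psi>_def)
  ultimately show "\<omega> \<in> (\<lambda>\<psi>. \<psi>(x := c)) ` ext_bijections T (H - {c})"
    by (auto simp: ext_bijections_def)
qed (use fun_upd_in_ext_bijections[OF assms] in auto)

lemma inj_on_fun_upd_ext_bijections:
  "x \<notin> T \<Longrightarrow> inj_on (\<lambda>\<psi>. \<psi>(x := c)) (ext_bijections T H)"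
  by (rule inj_onI) (auto simp: ext_bijections_def extensional_def fun_eq_iff, metis)

definition mean :: "'a set \<Rightarrow> ('a \<Rightarrow> real) \<Rightarrow> real" where
  "mean S f = sum f S / card S"

definition sum_sq_dev :: "'a set \<Rightarrow> ('a \<Rightarrow> real) \<Rightarrow> real" where
  "sum_sq_dev S f = (\<Sum>x\<in>S. (f x - mean S f)\<^sup>2)"

lemma sum_sq_diff_eq_sum_sq_dev:
  assumes "finite S"
  shows "(\<Sum>x\<in>S. (f x - y)\<^sup>2) = sum_sq_dev S f + card S * (mean S f - y)\<^sup>2"
proof (cases "S = {}")
  case False
  let ?m = "mean S f"
  have centred: "(\<Sum>x\<in>S. f x - ?m) = 0"
    using assms False by (simp add: sum_subtractf mean_def)
  have "(\<Sum>x\<in>S. (f x - y)\<^sup>2) = (\<Sum>x\<in>S. (f x - ?m)\<^sup>2 + 2 * (?m - y) * (f x - ?m) + (?m - y)\<^sup>2)"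
    by (rule sum.cong) (auto simp: power2_eq_square algebra_simps)
  also have "\<dots> = sum_sq_dev S f + 2 * (?m - y) * (\<Sum>x\<in>S. f x - ?m) + card S * (?m - y)\<^sup>2"
    by (simp add: sum.distrib sum_distrib_left sum_sq_dev_def)
  finally show ?thesis using centred by simp
qed (simp add: sum_sq_dev_def)

lemma sum_sq_dev_reindex:
  "inj_on g A \<Longrightarrow> sum_sq_dev (g ` A) f = sum_sq_dev A (f \<circ> g)"
  by (simp add: sum_sq_dev_def mean_def sum.reindex card_image)

lemma mean_reindex: "inj_on g A \<Longrightarrow> mean (g ` A) f = mean A (f \<circ> g)"
  by (simp add: mean_def sum.reindex card_image)

lemma abs_mean_diff_le:
  assumes "finite A" "0 \<le> c" "\<And>x. x \<in> A \<Longrightarrow> \<bar>f x - g x\<bar> \<le> c"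
  shows "\<bar>mean A f - mean A g\<bar> \<le> c"
proof (cases "A = {}")
  case False
  have "\<bar>sum f A - sum g A\<bar> \<le> (\<Sum>x\<in>A. \<bar>f x - g x\<bar>)"
    using sum_abs[of "\<lambda>x. f x - g x" A] by (simp add: sum_subtractf)
  also have "\<dots> \<le> card A * c" by (rule sum_bounded_above) (rule assms(3))
  finally have "\<bar>sum f A - sum g A\<bar> / card A \<le> c"
    using False assms(1) by (simp add: pos_divide_le_eq mult.commute card_gt_0_iff)
  then show ?thesis by (simp add: mean_def diff_divide_distrib[symmetric])
qed (simp add: mean_def assms(2))

lemma sum_sq_dev_le_fibres:
  assumes "finite S" "finite Y" "g ` S \<subseteq> Y"
  shows "sum_sq_dev S f \<le>
    (\<Sum>y\<in>Y. sum_sq_dev {x \<in> S. g x = y} f + card {x \<in> S. g x = y} * (mean {x \<in> S. g x = y} f - z)\<^sup>2)"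
proof -
  have "sum_sq_dev S f \<le> (\<Sum>x\<in>S. (f x - z)\<^sup>2)"
    using sum_sq_diff_eq_sum_sq_dev[OF assms(1), of f z] by simp
  also have "\<dots> = (\<Sum>y\<in>Y. \<Sum>x | x \<in> S \<and> g x = y. (f x - z)\<^sup>2)"
    by (rule sum.group[symmetric]) (use assms in auto)
  also have "\<dots> = (\<Sum>y\<in>Y. sum_sq_dev {x \<in> S. g x = y} f + card {x \<in> S. g x = y} * (mean {x \<in> S. g x = y} f - z)\<^sup>2)"
    using assms(1) by (intro sum.cong refl sum_sq_diff_eq_sum_sq_dev) auto
  finally show ?thesis .
qed

lemma sum_card_fibres:
  assumes "finite S" "finite Y" "g ` S \<subseteq> Y"
  shows "(\<Sum>y\<in>Y. card {x \<in> S. g x = y}) = card S"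
  using sum.group[OF assms, of "\<lambda>_. 1::nat"] by simp

lemma swap_target_image_fibre:
  assumes "x \<in> T" "a \<in> H" "b \<in> H"
  shows "swap_target T a b ` {\<omega> \<in> ext_bijections T H. \<omega> x = a} = {\<omega> \<in> ext_bijections T H. \<omega> x = b}"
    (is "?sw ` ?Fa = ?Fb")
proof (intro equalityI subsetI)
  fix \<omega> assume "\<omega> \<in> ?sw ` ?Fa"
  then show "\<omega> \<in> ?Fb"
    using assms by (auto simp: swap_target_apply intro: swap_target_in_ext_bijections)
next
  fix \<omega> assume \<omega>: "\<omega> \<in> ?Fb"
  then have "?sw \<omega> \<in> ?Fa"
    using assms by (auto simp: swap_target_apply intro: swap_target_in_ext_bijections)
  moreover have "\<omega> = ?sw (?sw \<omega>)" using \<omega> swap_target_swap_target by fastforce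
  ultimately show "\<omega> \<in> ?sw ` ?Fa" by blast
qed

lemma abs_mean_fibre_diff_le:
  assumes lip: "\<And>\<omega> a b. \<omega> \<in> ext_bijections T H \<Longrightarrow> a \<in> H \<Longrightarrow> b \<in> H \<Longrightarrow>
      \<bar>f \<omega> - f (swap_target T a b \<omega>)\<bar> \<le> c"
    and "finite T" "finite H" "0 \<le> c" "x \<in> T" "a \<in> H" "b \<in> H"
  shows "\<bar>mean {\<omega> \<in> ext_bijections T H. \<omega> x = a} f - mean {\<omega> \<in> ext_bijections T H. \<omega> x = b} f\<bar> \<le> c"
proof -
  let ?Fa = "{\<omega> \<in> ext_bijections T H. \<omega> x = a}" and ?sw = "swap_target T a b"
  have "inj_on ?sw ?Fa"
    by (rule inj_on_inverseI[of _ ?sw]) (blast intro: swap_target_swap_target)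
  then have "mean (?sw ` ?Fa) f = mean ?Fa (f \<circ> ?sw)"
    by (rule mean_reindex)
  then have "mean {\<omega> \<in> ext_bijections T H. \<omega> x = b} f = mean ?Fa (f \<circ> ?sw)"
    by (simp only: swap_target_image_fibre[OF assms(5-7)])
  moreover have "\<bar>mean ?Fa f - mean ?Fa (f \<circ> ?sw)\<bar> \<le> c"
    using assms by (intro abs_mean_diff_le) (simp_all add: finite_ext_bijections)
  ultimately show ?thesis by simp
qed

lemma bounded_diff_fun_upd:
  assumes lip: "\<And>\<omega> a b. \<omega> \<in> ext_bijections (insert x T) H \<Longrightarrow> a \<in> H \<Longrightarrow> b \<in> H \<Longrightarrow>
      \<bar>f \<omega> - f (swap_target (insert x T) a b \<omega>)\<bar> \<le> c"
    and "x \<notin> T" "c' \<in> H" "\<psi> \<in> ext_bijections T (H - {c'})" "a \<in> H - {c'}" "b \<in> H - {c'}"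
  shows "\<bar>f (\<psi>(x := c')) - f ((swap_target T a b \<psi>)(x := c'))\<bar> \<le> c"
proof -
  have "(swap_target T a b \<psi>)(x := c') = swap_target (insert x T) a b (\<psi>(x := c'))"
    using assms(2,5,6) by (intro fun_upd_swap_target) auto
  then show ?thesis using lip fun_upd_in_ext_bijections[OF assms(2-4)] assms(5,6) by auto
qed

lemma sum_sq_dev_ext_bijections_le:
  fixes c :: real
  assumes "finite T" "finite H" "card T = card H" "0 \<le> c"
    and lip: "\<And>\<omega> a b. \<omega> \<in> ext_bijections T H \<Longrightarrow> a \<in> H \<Longrightarrow> b \<in> H \<Longrightarrow>
      \<bar>f \<omega> - f (swap_target T a b \<omega>)\<bar> \<le> c"
  shows "sum_sq_dev (ext_bijections T H) f \<le> card (ext_bijections T H) * card T * c\<^sup>2"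
  using assms
proof (induction T arbitrary: H f rule: finite_induct)
  case empty
  then have single: "ext_bijections {} H = {\<lambda>_. undefined}"
    by (auto simp: ext_bijections_def extensional_def bij_betw_def)
  show ?case by (simp add: single sum_sq_dev_def mean_def)
next
  case (insert x T)
  let ?S = "ext_bijections (insert x T) H"
  define F where "F a = {\<omega> \<in> ?S. \<omega> x = a}" for a
  have fin_S: "finite ?S" by (simp add: finite_ext_bijections insert.hyps(1) insert.prems(1))
  have card_H: "card H = Suc (card T)" using insert by simp
  then obtain a0 where a0: "a0 \<in> H" by fastforce
  have fibre: "sum_sq_dev (F a) f \<le> card (F a) * card T * c\<^sup>2" if a: "a \<in> H" for a
  proof -
    let ?upd = "\<lambda>\<psi>. \<psi>(x := a)"
    have inj: "inj_on ?upd (ext_bijections T (H - {a}))"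
      by (rule inj_on_fun_upd_ext_bijections[OF insert.hyps(2)])
    have F_eq: "F a = ?upd ` ext_bijections T (H - {a})"
      unfolding F_def by (rule ext_bijections_fiber_eq[OF insert.hyps(2) a])
    have "sum_sq_dev (ext_bijections T (H - {a})) (f \<circ> ?upd)
        \<le> card (ext_bijections T (H - {a})) * card T * c\<^sup>2"
    proof (rule insert.IH)
      fix \<psi> a' b' assume "\<psi> \<in> ext_bijections T (H - {a})" "a' \<in> H - {a}" "b' \<in> H - {a}"
      from bounded_diff_fun_upd[OF insert.prems(4) insert.hyps(2) a this]
      show "\<bar>(f \<circ> ?upd) \<psi> - (f \<circ> ?upd) (swap_target T a' b' \<psi>)\<bar> \<le> c" by (simp only: o_apply)
    qed (use insert.prems card_H a in auto)
    then show ?thesis using F_eq sum_sq_dev_reindex[OF inj] card_image[OF inj] by simp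
  qed
  have fibre_mean: "(mean (F a) f - mean (F a0) f)\<^sup>2 \<le> c\<^sup>2" if "a \<in> H" for a
  proof -
    have "\<bar>mean (F a) f - mean (F a0) f\<bar> \<le> c"
      unfolding F_def using insert.hyps(1) insert.prems that a0
      by (intro abs_mean_fibre_diff_le[of "insert x T" H f c]) auto
    then show ?thesis by (metis abs_ge_zero power2_abs power_mono)
  qed
  have maps_to: "(\<lambda>\<omega>. \<omega> x) ` ?S \<subseteq> H"
    by (auto simp: ext_bijections_def bij_betw_def)
  have "sum_sq_dev ?S f \<le> (\<Sum>a\<in>H. sum_sq_dev (F a) f + card (F a) * (mean (F a) f - mean (F a0) f)\<^sup>2)"
    unfolding F_def by (rule sum_sq_dev_le_fibres[OF fin_S insert.prems(1) maps_to])
  also have "\<dots> \<le> (\<Sum>a\<in>H. card (F a) * (card T * c\<^sup>2) + card (F a) * c\<^sup>2)"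
    using fibre fibre_mean by (intro sum_mono add_mono mult_left_mono) (auto simp: mult.assoc)
  also have "\<dots> = real (\<Sum>a\<in>H. card (F a)) * (card T + 1) * c\<^sup>2"
    by (simp add: sum.distrib sum_distrib_left sum_distrib_right algebra_simps)
  also have "(\<Sum>a\<in>H. card (F a)) = card ?S"
    unfolding F_def by (rule sum_card_fibres[OF fin_S insert.prems(1) maps_to])
  finally show ?case using insert.hyps by (simp add: algebra_simps)
qed

lemma variance_pmf_of_set:
  assumes "finite S" "S \<noteq> {}"
  shows "measure_pmf.variance (pmf_of_set S) f = sum_sq_dev S f / card S"
  using assms by (simp add: integral_pmf_of_set sum_sq_dev_def mean_def)

lemma prob_deviation_ext_bijections_le:
  fixes c :: real
  assumes "finite T" "finite H" "card T = card H" "0 \<le> c" "0 < \<epsilon>"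
    and lip: "\<And>\<omega> a b. \<omega> \<in> ext_bijections T H \<Longrightarrow> a \<in> H \<Longrightarrow> b \<in> H \<Longrightarrow>
      \<bar>f \<omega> - f (swap_target T a b \<omega>)\<bar> \<le> c"
  defines "M \<equiv> pmf_of_set (ext_bijections T H)"
  shows "measure_pmf.prob M {\<omega>. \<bar>f \<omega> - measure_pmf.expectation M f\<bar> > \<epsilon>} \<le> card T * c\<^sup>2 / \<epsilon>\<^sup>2"
proof -
  let ?S = "ext_bijections T H"
  have fin: "finite ?S" and ne: "?S \<noteq> {}"
    using assms(1-3) by (auto simp: finite_ext_bijections ext_bijections_nonempty)
  have "measure_pmf.prob M {\<omega>. \<bar>f \<omega> - measure_pmf.expectation M f\<bar> > \<epsilon>}
      \<le> measure_pmf.prob M {\<omega> \<in> space M. \<bar>f \<omega> - measure_pmf.expectation M f\<bar> \<ge> \<epsilon>}"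
    by (rule measure_pmf.finite_measure_mono) auto
  also have "\<dots> \<le> measure_pmf.variance M f / \<epsilon>\<^sup>2"
    using fin ne assms(5) unfolding M_def
    by (intro measure_pmf.Chebyshev_inequality integrable_measure_pmf_finite) auto
  also have "\<dots> \<le> card T * c\<^sup>2 / \<epsilon>\<^sup>2"
  proof (rule divide_right_mono)
    have "sum_sq_dev ?S f \<le> card ?S * (card T * c\<^sup>2)"
      using sum_sq_dev_ext_bijections_le[OF assms(1-4) lip] by (simp add: mult.assoc)
    then show "measure_pmf.variance M f \<le> card T * c\<^sup>2"
      using fin ne by (simp add: M_def variance_pmf_of_set pos_divide_le_eq card_gt_0_iff mult.commute)
  qed simp
  finally show ?thesis .
qed

section \<open>Arc counts of an environment\<close>

lemma sum_card_fibres_le: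
  assumes "finite S" "finite Y"
  shows "(\<Sum>y\<in>Y. card {x \<in> S. g x = y}) \<le> card S"
proof -
  have "(\<Sum>y\<in>Y. card {x \<in> S. g x = y}) \<le> (\<Sum>y\<in>Y \<union> g ` S. card {x \<in> S. g x = y})"
    using assms by (intro sum_mono2) auto
  also have "\<dots> = card S" using assms by (intro sum_card_fibres) auto
  finally show ?thesis .
qed

lemma sum_abs_card_fibre_diff_le:
  assumes "finite S" "finite Y" "E \<subseteq> S" and agree: "\<And>x. x \<in> S - E \<Longrightarrow> g x = g' x"
  shows "(\<Sum>y\<in>Y. \<bar>real (card {x \<in> S. g x = y}) - real (card {x \<in> S. g' x = y})\<bar>) \<le> 2 * card E"
proof -
  have fin_E: "finite E" using assms(1,3) by (rule finite_subset[rotated])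
  have split: "card {x \<in> S. h x = y} = card {x \<in> E. h x = y} + card {x \<in> S - E. h x = y}" for h y
  proof -
    have "{x \<in> S. h x = y} = {x \<in> E. h x = y} \<union> {x \<in> S - E. h x = y}" using assms(3) by auto
    then show ?thesis using assms(1) fin_E by (simp add: card_Un_disjoint[symmetric] disjoint_iff)
  qed
  have outside: "{x \<in> S - E. g x = y} = {x \<in> S - E. g' x = y}" for y
    using agree by auto
  have "(\<Sum>y\<in>Y. \<bar>real (card {x \<in> S. g x = y}) - real (card {x \<in> S. g' x = y})\<bar>)
      \<le> (\<Sum>y\<in>Y. real (card {x \<in> E. g x = y}) + real (card {x \<in> E. g' x = y}))"
  proof (rule sum_mono)
    fix y
    have "real (card {x \<in> S. g x = y}) - real (card {x \<in> S. g' x = y})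
        = real (card {x \<in> E. g x = y}) - real (card {x \<in> E. g' x = y})"
      using split[of g y] split[of g' y] outside[of y] by simp
    then show "\<bar>real (card {x \<in> S. g x = y}) - real (card {x \<in> S. g' x = y})\<bar>
        \<le> real (card {x \<in> E. g x = y}) + real (card {x \<in> E. g' x = y})"
      by arith
  qed
  also have "\<dots> = real (\<Sum>y\<in>Y. card {x \<in> E. g x = y}) + real (\<Sum>y\<in>Y. card {x \<in> E. g' x = y})"
    by (simp add: sum.distrib)
  also have "\<dots> \<le> card E + card E"
    by (simp only: of_nat_add[symmetric] of_nat_le_iff) (intro add_mono sum_card_fibres_le fin_E assms(2))
  finally show ?thesis by simp
qed

lemma half_edges_Sigma: "half_edges d n = Sigma {..<n} (\<lambda>i. {..<d i})"
  by (auto simp: half_edges_def)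

lemma finite_half_edges [simp]: "finite (half_edges d n)"
  by (simp add: half_edges_Sigma)

lemma card_half_edges: "card (half_edges d n) = (\<Sum>i<n. d i)"
  by (simp add: half_edges_Sigma)

lemma card_half_edges_at: "i < n \<Longrightarrow> card {e \<in> half_edges d n. fst e = i} = d i"
proof -
  assume "i < n"
  then have "{e \<in> half_edges d n. fst e = i} = Pair i ` {..<d i}" by (auto simp: half_edges_def)
  then show ?thesis by (simp add: card_image inj_on_def)
qed

lemma half_edges_fst: "e \<in> half_edges d n \<Longrightarrow> fst e < n"
  by (auto simp: half_edges_def)

lemma envs_eq_ext_bijections: "envs dout din n = ext_bijections (half_edges dout n) (half_edges din n)"
  by (simp add: envs_def ext_bijections_def)

lemma env_maps_to:
  "\<omega> \<in> envs dout din n \<Longrightarrow> e \<in> half_edges dout n \<Longrightarrow> \<omega> e \<in> half_edges din n"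
  by (auto simp: envs_def bij_betw_def)

definition arc_count :: "(nat \<Rightarrow> nat) \<Rightarrow> (nat \<Rightarrow> nat) \<Rightarrow> nat \<Rightarrow> ((nat \<times> nat) \<Rightarrow> (nat \<times> nat))
    \<Rightarrow> nat \<Rightarrow> nat \<Rightarrow> nat" where
  "arc_count dout din n \<omega> i j =
     card {e \<in> half_edges dout n. fst e = i \<and> \<omega> e \<in> half_edges din n \<and> fst (\<omega> e) = j}"

lemma trans_P_arc_count: "trans_P dout din n \<omega> i j = arc_count dout din n \<omega> i j / dout i"
  by (simp add: trans_P_def arc_count_def)

lemma trans_P_nonneg: "0 \<le> trans_P dout din n \<omega> i j"
  by (simp add: trans_P_def)

lemma pi_s_nonneg: "0 \<le> pi_s dout din n \<omega> s j"
  by (induction s arbitrary: j) (auto simp: trans_P_nonneg intro!: sum_nonneg)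

lemma arc_count_env:
  "\<omega> \<in> envs dout din n \<Longrightarrow>
    arc_count dout din n \<omega> i j = card {e \<in> half_edges dout n. (fst e, fst (\<omega> e)) = (i, j)}"
  unfolding arc_count_def by (intro arg_cong[where f = card]) (auto dest: env_maps_to)

lemma sum_arc_count_row:
  assumes "\<omega> \<in> envs dout din n" "i < n"
  shows "(\<Sum>j<n. arc_count dout din n \<omega> i j) = dout i"
proof -
  let ?R = "{e \<in> half_edges dout n. fst e = i}"
  have "(\<Sum>j<n. arc_count dout din n \<omega> i j) = (\<Sum>j<n. card {e \<in> ?R. fst (\<omega> e) = j})"
    unfolding arc_count_env[OF assms(1)] by (intro sum.cong refl arg_cong[where f = card]) auto
  also have "\<dots> = card ?R"
    by (rule sum_card_fibres) (auto intro: half_edges_fst env_maps_to[OF assms(1)])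
  finally show ?thesis using card_half_edges_at[OF assms(2)] by simp
qed

lemma sum_arc_count_col:
  assumes "\<omega> \<in> envs dout din n" "j < n"
  shows "(\<Sum>i<n. arc_count dout din n \<omega> i j) = din j"
proof -
  let ?C = "{e \<in> half_edges dout n. fst (\<omega> e) = j}"
  have inj: "inj_on \<omega> (half_edges dout n)" and img: "\<omega> ` half_edges dout n = half_edges din n"
    using assms(1) by (auto simp: envs_def bij_betw_def)
  have "(\<Sum>i<n. arc_count dout din n \<omega> i j) = (\<Sum>i<n. card {e \<in> ?C. fst e = i})"
    unfolding arc_count_env[OF assms(1)] by (intro sum.cong refl arg_cong[where f = card]) auto
  also have "\<dots> = card ?C"
    by (rule sum_card_fibres) (auto intro: half_edges_fst)
  also have "\<dots> = card (\<omega> ` ?C)"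
    by (rule card_image[symmetric]) (rule inj_on_subset[OF inj], blast)
  also have "\<omega> ` ?C = {h \<in> \<omega> ` half_edges dout n. fst h = j}"
    by blast
  finally show ?thesis using card_half_edges_at[OF assms(2)] by (simp add: img)
qed

lemma sum_abs_arc_count_swap_le:
  assumes \<omega>: "\<omega> \<in> envs dout din n" and "a \<in> half_edges din n" "b \<in> half_edges din n"
  defines "\<omega>' \<equiv> swap_target (half_edges dout n) a b \<omega>"
  shows "(\<Sum>i<n. \<Sum>j<n. \<bar>real (arc_count dout din n \<omega> i j) - real (arc_count dout din n \<omega>' i j)\<bar>) \<le> 4"
proof -
  let ?T = "half_edges dout n"
  define E where "E = {e \<in> ?T. \<omega> e \<in> {a, b}}"
  have \<omega>': "\<omega>' \<in> envs dout din n"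
    using assms by (simp add: envs_eq_ext_bijections swap_target_in_ext_bijections)
  have "card E \<le> card {a, b}"
    using \<omega> by (intro card_inj_on_le[of \<omega>]) (auto simp: E_def envs_def bij_betw_def inj_on_def)
  then have card_E: "card E \<le> 2" using card_insert_le_m1[of 2 "{b}" a] by simp
  have "(\<Sum>i<n. \<Sum>j<n. \<bar>real (arc_count dout din n \<omega> i j) - real (arc_count dout din n \<omega>' i j)\<bar>)
      = (\<Sum>y\<in>{..<n} \<times> {..<n}. \<bar>real (card {e \<in> ?T. (fst e, fst (\<omega> e)) = y})
                                - real (card {e \<in> ?T. (fst e, fst (\<omega>' e)) = y})\<bar>)"
    by (simp add: sum.cartesian_product arc_count_env[OF \<omega>] arc_count_env[OF \<omega>']
        case_prod_beta prod_eq_iff)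
  also have "\<dots> \<le> 2 * card E"
    by (rule sum_abs_card_fibre_diff_le) (auto simp: E_def \<omega>'_def swap_target_apply)
  finally show ?thesis using card_E by simp
qed

section \<open>Sensitivity of the walk to swapping two heads\<close>

lemma l1_vec_mat_le:
  fixes x :: "'i \<Rightarrow> real" and Q :: "'i \<Rightarrow> 'j \<Rightarrow> real"
  shows "(\<Sum>j\<in>J. \<bar>\<Sum>i\<in>I. x i * Q i j\<bar>) \<le> (\<Sum>i\<in>I. \<bar>x i\<bar> * (\<Sum>j\<in>J. \<bar>Q i j\<bar>))"
proof -
  have "(\<Sum>j\<in>J. \<bar>\<Sum>i\<in>I. x i * Q i j\<bar>) \<le> (\<Sum>j\<in>J. \<Sum>i\<in>I. \<bar>x i\<bar> * \<bar>Q i j\<bar>)"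
    by (intro sum_mono order.trans[OF sum_abs]) (simp add: abs_mult)
  also have "\<dots> = (\<Sum>i\<in>I. \<bar>x i\<bar> * (\<Sum>j\<in>J. \<bar>Q i j\<bar>))"
    by (simp add: sum.swap[of _ J] sum_distrib_left)
  finally show ?thesis .
qed

lemma l1_vec_mat_diff_le:
  fixes p q :: "'i \<Rightarrow> real" and Q Q' :: "'i \<Rightarrow> 'j \<Rightarrow> real"
  assumes "\<And>i. i \<in> I \<Longrightarrow> (\<Sum>j\<in>J. \<bar>Q' i j\<bar>) \<le> 1"
  shows "(\<Sum>j\<in>J. \<bar>(\<Sum>i\<in>I. p i * Q i j) - (\<Sum>i\<in>I. q i * Q' i j)\<bar>)
    \<le> (\<Sum>i\<in>I. \<bar>p i - q i\<bar>) + (\<Sum>i\<in>I. \<bar>p i\<bar> * (\<Sum>j\<in>J. \<bar>Q i j - Q' i j\<bar>))"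
proof -
  have split: "(\<Sum>i\<in>I. p i * Q i j) - (\<Sum>i\<in>I. q i * Q' i j)
      = (\<Sum>i\<in>I. (p i - q i) * Q' i j) + (\<Sum>i\<in>I. p i * (Q i j - Q' i j))" for j
    by (simp add: algebra_simps sum_subtractf flip: sum.distrib)
  have "(\<Sum>j\<in>J. \<bar>(\<Sum>i\<in>I. p i * Q i j) - (\<Sum>i\<in>I. q i * Q' i j)\<bar>)
      \<le> (\<Sum>j\<in>J. \<bar>\<Sum>i\<in>I. (p i - q i) * Q' i j\<bar> + \<bar>\<Sum>i\<in>I. p i * (Q i j - Q' i j)\<bar>)"
    unfolding split by (rule sum_mono) (rule abs_triangle_ineq)
  also have "\<dots> = (\<Sum>j\<in>J. \<bar>\<Sum>i\<in>I. (p i - q i) * Q' i j\<bar>) + (\<Sum>j\<in>J. \<bar>\<Sum>i\<in>I. p i * (Q i j - Q' i j)\<bar>)"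
    by (rule sum.distrib)
  also have "\<dots> \<le> (\<Sum>i\<in>I. \<bar>p i - q i\<bar> * (\<Sum>j\<in>J. \<bar>Q' i j\<bar>)) + (\<Sum>i\<in>I. \<bar>p i\<bar> * (\<Sum>j\<in>J. \<bar>Q i j - Q' i j\<bar>))"
    by (intro add_mono l1_vec_mat_le)
  also have "(\<Sum>i\<in>I. \<bar>p i - q i\<bar> * (\<Sum>j\<in>J. \<bar>Q' i j\<bar>)) \<le> (\<Sum>i\<in>I. \<bar>p i - q i\<bar>)"
    using assms by (intro sum_mono mult_right_le_one_le) (auto intro: sum_nonneg)
  finally show ?thesis by simp
qed

lemma abs_tv_dist_diff_le:
  "\<bar>tv_dist n \<mu> \<nu> - tv_dist n \<mu>' \<nu>'\<bar> \<le> ((\<Sum>j<n. \<bar>\<mu> j - \<mu>' j\<bar>) + (\<Sum>j<n. \<bar>\<nu> j - \<nu>' j\<bar>)) / 2"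
proof -
  have "tv_dist n \<mu> \<nu> - tv_dist n \<mu>' \<nu>' = (\<Sum>j<n. \<bar>\<mu> j - \<nu> j\<bar> - \<bar>\<mu>' j - \<nu>' j\<bar>) / 2"
    by (simp add: tv_dist_def sum_subtractf)
  then have "\<bar>tv_dist n \<mu> \<nu> - tv_dist n \<mu>' \<nu>'\<bar> = \<bar>\<Sum>j<n. \<bar>\<mu> j - \<nu> j\<bar> - \<bar>\<mu>' j - \<nu>' j\<bar>\<bar> / 2"
    by (simp only: abs_divide abs_numeral)
  also have "\<dots> \<le> (\<Sum>j<n. \<bar>\<bar>\<mu> j - \<nu> j\<bar> - \<bar>\<mu>' j - \<nu>' j\<bar>\<bar>) / 2"
    by (intro divide_right_mono sum_abs) simp
  also have "\<dots> \<le> (\<Sum>j<n. \<bar>\<mu> j - \<mu>' j\<bar> + \<bar>\<nu> j - \<nu>' j\<bar>) / 2"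
    by (intro divide_right_mono sum_mono) auto
  finally show ?thesis by (simp add: sum.distrib)
qed

locale bounded_in_degree_config =
  fixes dout din :: "nat \<Rightarrow> nat" and n D :: nat
  assumes dout_pos: "\<And>i. i < n \<Longrightarrow> 0 < dout i"
    and din_le: "\<And>j. j < n \<Longrightarrow> din j \<le> D"
    and num_arcs_pos: "0 < num_arcs din n"
begin

abbreviation m :: real where "m \<equiv> real (num_arcs din n)"

lemma D_pos: "1 \<le> D"
proof -
  obtain j where "j < n" "0 < din j"
  proof (rule ccontr)
    assume "\<not> thesis"
    with that have "num_arcs din n = 0" by (auto simp: num_arcs_def)
    with num_arcs_pos show False by simp
  qed
  then show ?thesis using din_le[of j] by simp
qed

lemma sum_trans_P_row:
  assumes "\<omega> \<in> envs dout din n" "i < n"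
  shows "(\<Sum>j<n. trans_P dout din n \<omega> i j) = 1"
proof -
  have "(\<Sum>j<n. trans_P dout din n \<omega> i j) = real (\<Sum>j<n. arc_count dout din n \<omega> i j) / dout i"
    by (simp add: trans_P_arc_count sum_divide_distrib)
  then show ?thesis using dout_pos[OF assms(2)] by (simp add: sum_arc_count_row[OF assms])
qed

lemma pi_s_le:
  assumes \<omega>: "\<omega> \<in> envs dout din n"
  shows "j < n \<Longrightarrow> pi_s dout din n \<omega> s j \<le> real D ^ (s + 1) / m"
proof (induction s arbitrary: j)
  case 0
  then show ?case using din_le[of j] num_arcs_pos by (simp add: divide_right_mono)
next
  case (Suc s)
  have "pi_s dout din n \<omega> (Suc s) j \<le> (\<Sum>i<n. real D ^ (s + 1) / m * arc_count dout din n \<omega> i j)"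
  proof (simp only: pi_s.simps, rule sum_mono)
    fix i assume "i \<in> {..<n}"
    then have "trans_P dout din n \<omega> i j \<le> arc_count dout din n \<omega> i j"
      using dout_pos[of i] by (simp add: trans_P_arc_count divide_le_eq mult_le_cancel_left1)
    then show "pi_s dout din n \<omega> s i * trans_P dout din n \<omega> i j \<le> real D ^ (s + 1) / m * arc_count dout din n \<omega> i j"
      using Suc.IH \<open>i \<in> {..<n}\<close> by (intro mult_mono) (auto simp: trans_P_nonneg)
  qed
  also have "\<dots> = real D ^ (s + 1) / m * real (\<Sum>i<n. arc_count dout din n \<omega> i j)"
    by (simp only: sum_distrib_left of_nat_sum)
  also have "\<dots> = real D ^ (s + 1) / m * din j"
    by (simp only: sum_arc_count_col[OF \<omega> Suc.prems])
  also have "\<dots> \<le> real D ^ (s + 1) / m * D"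
    using din_le[OF Suc.prems] by (intro mult_left_mono) auto
  also have "\<dots> = real D ^ (Suc s + 1) / m"
    by simp
  finally show ?case .
qed

lemma l1_trans_P_diff_le:
  "i < n \<Longrightarrow> (\<Sum>j<n. \<bar>trans_P dout din n \<omega> i j - trans_P dout din n \<omega>' i j\<bar>)
    \<le> (\<Sum>j<n. \<bar>real (arc_count dout din n \<omega> i j) - real (arc_count dout din n \<omega>' i j)\<bar>)"
proof (rule sum_mono)
  fix j assume "i < n"
  let ?dA = "\<bar>real (arc_count dout din n \<omega> i j) - real (arc_count dout din n \<omega>' i j)\<bar>"
  have "\<bar>trans_P dout din n \<omega> i j - trans_P dout din n \<omega>' i j\<bar> = ?dA / dout i"
    by (simp add: trans_P_arc_count abs_divide flip: diff_divide_distrib)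
  also have "\<dots> \<le> ?dA / 1"
    using dout_pos[OF \<open>i < n\<close>] by (intro divide_left_mono) auto
  finally show "\<bar>trans_P dout din n \<omega> i j - trans_P dout din n \<omega>' i j\<bar> \<le> ?dA" by simp
qed

text \<open>Swapping two heads moves at most two arcs, so each step of the walk adds at most
  \<open>4 max \<pi>\<^sub>s\<close> to the \<open>\<ell>\<^sup>1\<close>-distance, while the stochastic matrix does not increase it.\<close>

lemma l1_pi_s_swap_le:
  assumes \<omega>: "\<omega> \<in> envs dout din n" and ab: "a \<in> half_edges din n" "b \<in> half_edges din n"
  defines "\<omega>' \<equiv> swap_target (half_edges dout n) a b \<omega>"
  shows "(\<Sum>j<n. \<bar>pi_s dout din n \<omega> s j - pi_s dout din n \<omega>' s j\<bar>) \<le> 4 * s * real D ^ s / m"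
proof (induction s)
  case (Suc s)
  let ?p = "pi_s dout din n \<omega> s" and ?q = "pi_s dout din n \<omega>' s"
  let ?P = "trans_P dout din n \<omega>" and ?P' = "trans_P dout din n \<omega>'"
  let ?dA = "\<lambda>i j. \<bar>real (arc_count dout din n \<omega> i j) - real (arc_count dout din n \<omega>' i j)\<bar>"
  let ?M = "real D ^ (s + 1) / m"
  have \<omega>': "\<omega>' \<in> envs dout din n"
    using assms by (simp add: envs_eq_ext_bijections swap_target_in_ext_bijections)
  have "(\<Sum>i<n. \<bar>?p i\<bar> * (\<Sum>j<n. \<bar>?P i j - ?P' i j\<bar>)) \<le> (\<Sum>i<n. ?M * (\<Sum>j<n. ?dA i j))"
  proof (rule sum_mono)
    fix i assume "i \<in> {..<n}"
    then show "\<bar>?p i\<bar> * (\<Sum>j<n. \<bar>?P i j - ?P' i j\<bar>) \<le> ?M * (\<Sum>j<n. ?dA i j)"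
      using pi_s_le[OF \<omega>, of i s] l1_trans_P_diff_le[of i \<omega> \<omega>']
      by (intro mult_mono) (auto simp: pi_s_nonneg intro: sum_nonneg)
  qed
  also have "\<dots> = ?M * (\<Sum>i<n. \<Sum>j<n. ?dA i j)"
    by (simp only: sum_distrib_left)
  also have "\<dots> \<le> ?M * 4"
    using sum_abs_arc_count_swap_le[OF \<omega> ab] by (intro mult_left_mono) (simp_all add: \<omega>'_def)
  finally have perturb: "(\<Sum>i<n. \<bar>?p i\<bar> * (\<Sum>j<n. \<bar>?P i j - ?P' i j\<bar>)) \<le> ?M * 4" .
  have "(\<Sum>j<n. \<bar>pi_s dout din n \<omega> (Suc s) j - pi_s dout din n \<omega>' (Suc s) j\<bar>)
      \<le> (\<Sum>i<n. \<bar>?p i - ?q i\<bar>) + (\<Sum>i<n. \<bar>?p i\<bar> * (\<Sum>j<n. \<bar>?P i j - ?P' i j\<bar>))"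
    unfolding pi_s.simps
    by (rule l1_vec_mat_diff_le) (simp add: trans_P_nonneg sum_trans_P_row[OF \<omega>'])
  also have "\<dots> \<le> 4 * s * real D ^ s / m + ?M * 4"
    using perturb Suc.IH by linarith
  also have "\<dots> \<le> 4 * real (Suc s) * real D ^ Suc s / m"
  proof -
    have "s * real D ^ s \<le> s * real D ^ Suc s"
      using D_pos by (intro mult_left_mono power_increasing) auto
    then have "4 * s * real D ^ s + real D ^ Suc s * 4 \<le> 4 * real (Suc s) * real D ^ Suc s"
      by (simp add: algebra_simps)
    then show ?thesis by (simp add: divide_right_mono flip: add_divide_distrib)
  qed
  finally show ?case .
qed simp

lemma abs_tv_dist_pi_s_swap_le:
  assumes "\<omega> \<in> envs dout din n" "a \<in> half_edges din n" "b \<in> half_edges din n"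
  defines "\<omega>' \<equiv> swap_target (half_edges dout n) a b \<omega>"
  shows "\<bar>tv_dist n (pi_s dout din n \<omega> s) (pi_s dout din n \<omega> r)
          - tv_dist n (pi_s dout din n \<omega>' s) (pi_s dout din n \<omega>' r)\<bar>
         \<le> 2 * (s * real D ^ s + r * real D ^ r) / m"
proof -
  have "\<bar>tv_dist n (pi_s dout din n \<omega> s) (pi_s dout din n \<omega> r)
          - tv_dist n (pi_s dout din n \<omega>' s) (pi_s dout din n \<omega>' r)\<bar>
      \<le> ((\<Sum>j<n. \<bar>pi_s dout din n \<omega> s j - pi_s dout din n \<omega>' s j\<bar>)
          + (\<Sum>j<n. \<bar>pi_s dout din n \<omega> r j - pi_s dout din n \<omega>' r j\<bar>)) / 2"
    by (rule abs_tv_dist_diff_le)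
  also have "\<dots> \<le> (4 * s * real D ^ s / m + 4 * r * real D ^ r / m) / 2"
    using l1_pi_s_swap_le[OF assms(1-3)] unfolding \<omega>'_def by (intro divide_right_mono add_mono) auto
  also have "\<dots> = 2 * (s * real D ^ s + r * real D ^ r) / m"
    using num_arcs_pos by (simp add: field_simps)
  finally show ?thesis .
qed

lemma prob_tv_dist_pi_s_deviation_le:
  fixes s r :: nat and \<epsilon> :: real
  assumes balanced: "num_arcs dout n = num_arcs din n" and "0 < \<epsilon>"
  defines "M \<equiv> pmf_of_set (envs dout din n)"
    and "f \<equiv> \<lambda>\<omega>. tv_dist n (pi_s dout din n \<omega> s) (pi_s dout din n \<omega> r)"
  shows "measure_pmf.prob M {\<omega>. \<bar>f \<omega> - measure_pmf.expectation M f\<bar> > \<epsilon>}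
    \<le> 4 * (s * real D ^ s + r * real D ^ r)\<^sup>2 / (m * \<epsilon>\<^sup>2)"
proof -
  let ?T = "half_edges dout n" and ?H = "half_edges din n"
  define c where "c = 2 * (s * real D ^ s + r * real D ^ r) / m"
  have card_T: "card ?T = num_arcs din n"
    using balanced by (simp add: card_half_edges num_arcs_def)
  have "measure_pmf.prob M {\<omega>. \<bar>f \<omega> - measure_pmf.expectation M f\<bar> > \<epsilon>} \<le> card ?T * c\<^sup>2 / \<epsilon>\<^sup>2"
    unfolding M_def envs_eq_ext_bijections
  proof (rule prob_deviation_ext_bijections_le)
    show "card ?T = card ?H" using card_T by (simp add: card_half_edges num_arcs_def)
    show "0 \<le> c" by (simp add: c_def)
    fix \<omega> a b assume "\<omega> \<in> ext_bijections ?T ?H" "a \<in> ?H" "b \<in> ?H"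
    then show "\<bar>f \<omega> - f (swap_target ?T a b \<omega>)\<bar> \<le> c"
      unfolding f_def c_def by (intro abs_tv_dist_pi_s_swap_le) (simp_all add: envs_eq_ext_bijections)
  qed (simp_all add: \<open>0 < \<epsilon>\<close>)
  also have "\<dots> = 4 * (s * real D ^ s + r * real D ^ r)\<^sup>2 / (m * \<epsilon>\<^sup>2)"
  proof -
    have "m * (2 * x / m)\<^sup>2 / \<epsilon>\<^sup>2 = 4 * x\<^sup>2 / (m * \<epsilon>\<^sup>2)" for x
      using num_arcs_pos by (simp add: power2_eq_square field_simps)
    from this[of "s * real D ^ s + r * real D ^ r"] show ?thesis by (simp only: card_T c_def)
  qed
  finally show ?thesis .
qed

end

section \<open>Concentration of the distance between \<open>\<pi>\<^sub>h\<close> and \<open>\<pi>\<^sub>t\<close>\<close>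

lemma max_deg_ge:
  "i < n \<Longrightarrow> din i \<le> max_deg dout din n \<and> dout i \<le> max_deg dout din n"
  using Max_ge[of "(\<lambda>i. max (dout i) (din i)) ` {..<n}" "max (dout i) (din i)"]
  by (simp add: max_deg_def)

lemma max_deg_le:
  "0 < n \<Longrightarrow> (\<And>i. i < n \<Longrightarrow> din i \<le> D \<and> dout i \<le> D) \<Longrightarrow> max_deg dout din n \<le> D"
  unfolding max_deg_def by (subst Max_le_iff) auto

lemma hor_bounds:
  assumes "1 \<le> n" "2 \<le> max_deg dout din n"
  shows "real (hor dout din n) \<le> ln n"
    and "real (max_deg dout din n) ^ hor dout din n \<le> real n powr (1/10)"
proof -
  let ?\<Delta> = "max_deg dout din n" and ?h = "hor dout din n"
  have "ln (1/2) \<le> (1/2 - 1 :: real)" by (rule ln_le_minus_one) simp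
  then have "1/2 \<le> ln (2 :: real)" by (simp add: ln_div)
  moreover have "ln 2 \<le> ln (real ?\<Delta>)" using assms(2) by simp
  ultimately have ln_\<Delta>: "1/2 \<le> ln (real ?\<Delta>)" by linarith
  have ln_n: "0 \<le> ln (real n)" using assms(1) by simp
  have h_le: "real ?h \<le> ln (real n) / (10 * ln (real ?\<Delta>))"
    using ln_\<Delta> ln_n by (simp add: hor_def)
  also have "\<dots> \<le> ln n"
    using divide_left_mono[of 1 "10 * ln (real ?\<Delta>)" "ln n"] ln_\<Delta> ln_n by simp
  finally show "real ?h \<le> ln n" .
  have "real ?h * ln (real ?\<Delta>) \<le> ln (real n) / 10"
    using h_le ln_\<Delta> by (simp add: le_divide_eq mult.commute)
  then have "exp (real ?h * ln (real ?\<Delta>)) \<le> exp (ln (real n) / 10)" by simp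
  then show "real ?\<Delta> ^ ?h \<le> real n powr (1/10)"
    using assms by (simp add: exp_of_nat_mult powr_def)
qed

lemma prob_tv_ht_deviation_le:
  fixes dout din :: "nat \<Rightarrow> nat" and n t D :: nat and \<epsilon> :: real
  assumes balanced: "(\<Sum>i<n. din i) = (\<Sum>i<n. dout i)"
    and min_deg: "\<And>i. i < n \<Longrightarrow> 2 \<le> din i \<and> 2 \<le> dout i"
    and bounded: "\<And>i. i < n \<Longrightarrow> din i \<le> D \<and> dout i \<le> D"
    and "1 \<le> n" "0 < \<epsilon>"
  defines "M \<equiv> pmf_of_set (envs dout din n)"
  shows "measure_pmf.prob M {\<omega>. \<bar>tv_ht dout din n t \<omega> - measure_pmf.expectation M (tv_ht dout din n t)\<bar> > \<epsilon>}
    \<le> 2 / \<epsilon>\<^sup>2 * ((ln n * real n powr (1/10) + t * real D ^ t)\<^sup>2 / n)"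
proof -
  let ?\<Delta> = "max_deg dout din n" and ?h = "hor dout din n"
  have \<Delta>_2: "2 \<le> ?\<Delta>" using max_deg_ge[of 0 n din dout] min_deg[of 0] \<open>1 \<le> n\<close> by auto
  have \<Delta>_le: "?\<Delta> \<le> D" using max_deg_le[of n din D dout] bounded \<open>1 \<le> n\<close> by simp
  have arcs_ge: "2 * n \<le> num_arcs din n"
    using sum_mono[of "{..<n}" "\<lambda>_. 2" din] min_deg by (simp add: num_arcs_def)
  interpret bounded_in_degree_config dout din n ?\<Delta>
    using min_deg max_deg_ge arcs_ge \<open>1 \<le> n\<close> by unfold_locales force+
  have "measure_pmf.prob M {\<omega>. \<bar>tv_ht dout din n t \<omega> - measure_pmf.expectation M (tv_ht dout din n t)\<bar> > \<epsilon>}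
      \<le> 4 * (?h * real ?\<Delta> ^ ?h + t * real ?\<Delta> ^ t)\<^sup>2 / (m * \<epsilon>\<^sup>2)"
    using prob_tv_dist_pi_s_deviation_le[of \<epsilon> ?h t] balanced \<open>0 < \<epsilon>\<close>
    unfolding M_def tv_ht_def num_arcs_def by (simp add: fun_eq_iff)
  also have "\<dots> \<le> 4 * (ln n * real n powr (1/10) + t * real D ^ t)\<^sup>2 / (2 * real n * \<epsilon>\<^sup>2)"
  proof (rule frac_le)
    have "?h * real ?\<Delta> ^ ?h \<le> ln n * real n powr (1/10)"
      using hor_bounds[OF \<open>1 \<le> n\<close> \<Delta>_2] by (intro mult_mono) auto
    moreover have "t * real ?\<Delta> ^ t \<le> t * real D ^ t"
      using \<Delta>_le by (intro mult_left_mono power_mono) auto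
    ultimately have "?h * real ?\<Delta> ^ ?h + t * real ?\<Delta> ^ t \<le> ln n * real n powr (1/10) + t * real D ^ t"
      by (rule add_mono)
    then show "4 * (?h * real ?\<Delta> ^ ?h + t * real ?\<Delta> ^ t)\<^sup>2
        \<le> 4 * (ln n * real n powr (1/10) + t * real D ^ t)\<^sup>2"
      by (auto intro!: mult_left_mono power_mono)
    show "2 * real n * \<epsilon>\<^sup>2 \<le> m * \<epsilon>\<^sup>2"
      using arcs_ge by (intro mult_right_mono) auto
  qed (use \<open>1 \<le> n\<close> \<open>0 < \<epsilon>\<close> in auto)
  also have "\<dots> = 2 / \<epsilon>\<^sup>2 * ((ln n * real n powr (1/10) + t * real D ^ t)\<^sup>2 / n)"
    using \<open>1 \<le> n\<close> \<open>0 < \<epsilon>\<close> by (simp add: field_simps)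
  finally show ?thesis .
qed

lemma ln_mul_root_plus_const_sq_div_tendsto_zero:
  fixes K :: real
  shows "(\<lambda>n::nat. (ln n * real n powr (1/10) + K)\<^sup>2 / n) \<longlonglongrightarrow> 0"
  by real_asymp

theorem lemma5:
  fixes dout din :: "nat \<Rightarrow> nat \<Rightarrow> nat" and t :: nat
  assumes balanced: "\<And>n. (\<Sum>i<n. din n i) = (\<Sum>i<n. dout n i)"
    and min_deg: "\<And>n i. i < n \<Longrightarrow> 2 \<le> din n i \<and> 2 \<le> dout n i"
    and bounded: "\<exists>D. \<forall>n i. i < n \<longrightarrow> din n i \<le> D \<and> dout n i \<le> D"
  shows "\<forall>\<epsilon>>0. (\<lambda>n. measure_pmf.prob (pmf_of_set (envs (dout n) (din n) n))
            {\<omega>. \<bar>tv_ht (dout n) (din n) n t \<omega>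
                 - measure_pmf.expectation (pmf_of_set (envs (dout n) (din n) n))
                     (tv_ht (dout n) (din n) n t)\<bar> > \<epsilon>}) \<longlonglongrightarrow> 0"
proof (intro allI impI)
  fix \<epsilon> :: real assume "\<epsilon> > 0"
  obtain D where D: "\<forall>n i. i < n \<longrightarrow> din n i \<le> D \<and> dout n i \<le> D" using bounded by blast
  let ?prob = "\<lambda>n. measure_pmf.prob (pmf_of_set (envs (dout n) (din n) n))
            {\<omega>. \<bar>tv_ht (dout n) (din n) n t \<omega>
                 - measure_pmf.expectation (pmf_of_set (envs (dout n) (din n) n))
                     (tv_ht (dout n) (din n) n t)\<bar> > \<epsilon>}"
  let ?bound = "\<lambda>n::nat. 2 / \<epsilon>\<^sup>2 * ((ln n * real n powr (1/10) + t * real D ^ t)\<^sup>2 / n)"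
  have lower: "eventually (\<lambda>n. 0 \<le> ?prob n) sequentially"
    by simp
  have "eventually (\<lambda>n. ?prob n \<le> ?bound n) sequentially"
    using eventually_ge_at_top[of 1]
  proof eventually_elim
    case (elim n)
    show ?case by (rule prob_tv_ht_deviation_le) (use D balanced min_deg elim \<open>\<epsilon> > 0\<close> in auto)
  qed
  moreover have "?bound \<longlonglongrightarrow> 0"
    by (intro tendsto_mult_right_zero ln_mul_root_plus_const_sq_div_tendsto_zero)
  ultimately show "?prob \<longlonglongrightarrow> 0"
    by (rule tendsto_sandwich[OF lower _ tendsto_const])
qed

end
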